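(* Let $X$ be a finite connected poset and $K$ a field. For any $\theta\in\mathcal{M}(X)$ there exists a map $\sigma:X^2_<\to K^*$ compatible with $\theta$.
   Context: $X^2_<=\{(x,y)\in X^2: x<y\}$ and $K^*=K\setminus\{0\}$. For $x\le y$, $e_{xy}$ denotes the element of the incidence algebra $I(X,K)$ (functions $X\times X\to K$ vanishing off $\{x\le y\}$, with product $(fg)(x,y)=\sum_{x\le z\le y}f(x,z)g(z,y)$) equal to $1$ at $(x,y)$ and $0$ elsewhere; $B=\{e_{xy}:x<y\}$. For a bijection $\theta:B\to B$ and a maximal chain $C:u_1<\dots<u_m$, $\theta$ is increasing on $C$ if there is a maximal chain $D:v_1<\dots<v_m$ with $\theta(e_{u_iu_j})=e_{v_iv_j}$ for all $i<j$, decreasing if $\theta(e_{u_iu_j})=e_{v_{m-j+1}v_{m-i+1}}$ for all $i<j$. $\mathcal{M}(X)$ is the set of bijections $B\to B$ increasing or decreasing on every maximal chain. A map $\sigma:X^2_<\to K^*$ is compatible with a bijection $\theta:B\to B$ if, for all $x<y<z$, $\sigma(x,z)=\sigma(x,y)\sigma(y,z)$ whenever $\theta(e_{xz})=\theta(e_{xy})\theta(e_{yz})$, and $\sigma(x,z)=-\sigma(x,y)\sigma(y,z)$ whenever $\theta(e_{xz})=\theta(e_{yz})\theta(e_{xy})$ (products in $I(X,K)$). *)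

theory Defs
  imports Main
begin

text \<open>A finite poset is a finite set X of a type with a partial order. Elements of the
incidence algebra I(X,K) are represented as functions on pairs; they vanish off
{(x,y). x \<le> y, x,y \<in> X}.\<close>

definition incidence_algebra :: "'a::order set \<Rightarrow> ('a \<times> 'a \<Rightarrow> 'k::field) set" where
  "incidence_algebra X = {f. \<forall>x y. \<not> (x \<in> X \<and> y \<in> X \<and> x \<le> y) \<longrightarrow> f (x, y) = 0}"

definition inc_mult :: "'a::order set \<Rightarrow> ('a \<times> 'a \<Rightarrow> 'k::field) \<Rightarrow> ('a \<times> 'a \<Rightarrow> 'k) \<Rightarrow> ('a \<times> 'a \<Rightarrow> 'k)" where
  "inc_mult X f g = (\<lambda>(x, y). if x \<in> X \<and> y \<in> X \<and> x \<le> y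
      then (\<Sum>z\<in>{z\<in>X. x \<le> z \<and> z \<le> y}. f (x, z) * g (z, y)) else 0)"

definition e_elem :: "'a \<Rightarrow> 'a \<Rightarrow> ('a \<times> 'a \<Rightarrow> 'k::field)" where
  "e_elem x y = (\<lambda>p. if p = (x, y) then 1 else 0)"

definition basis_B :: "'a::order set \<Rightarrow> ('a \<times> 'a \<Rightarrow> 'k::field) set" where
  "basis_B X = {e_elem x y | x y. x \<in> X \<and> y \<in> X \<and> x < y}"

definition poset_connected :: "'a::order set \<Rightarrow> bool" where
  "poset_connected X \<longleftrightarrow> X \<noteq> {} \<and>
     (\<forall>x\<in>X. \<forall>y\<in>X. (\<lambda>a b. a \<in> X \<and> b \<in> X \<and> (a \<le> b \<or> b \<le> a))\<^sup>*\<^sup>* x y)"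

definition is_chain_in :: "'a::order set \<Rightarrow> 'a set \<Rightarrow> bool" where
  "is_chain_in X C \<longleftrightarrow> C \<subseteq> X \<and> (\<forall>a\<in>C. \<forall>b\<in>C. a \<le> b \<or> b \<le> a)"

definition is_maximal_chain :: "'a::order set \<Rightarrow> 'a set \<Rightarrow> bool" where
  "is_maximal_chain X C \<longleftrightarrow> is_chain_in X C \<and> (\<forall>D. is_chain_in X D \<and> C \<subseteq> D \<longrightarrow> D = C)"

definition max_chain_list :: "'a::order set \<Rightarrow> 'a list \<Rightarrow> bool" where
  "max_chain_list X us \<longleftrightarrow> sorted_wrt (<) us \<and> is_maximal_chain X (set us)"

definition increasing_on :: "'a::order set \<Rightarrow> (('a \<times> 'a \<Rightarrow> 'k::field) \<Rightarrow> ('a \<times> 'a \<Rightarrow> 'k)) \<Rightarrow> 'a list \<Rightarrow> bool" where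
  "increasing_on X \<theta> us \<longleftrightarrow> (\<exists>vs. max_chain_list X vs \<and> length vs = length us \<and>
      (\<forall>i j. i < j \<and> j < length us \<longrightarrow> \<theta> (e_elem (us ! i) (us ! j)) = e_elem (vs ! i) (vs ! j)))"

definition decreasing_on :: "'a::order set \<Rightarrow> (('a \<times> 'a \<Rightarrow> 'k::field) \<Rightarrow> ('a \<times> 'a \<Rightarrow> 'k)) \<Rightarrow> 'a list \<Rightarrow> bool" where
  "decreasing_on X \<theta> us \<longleftrightarrow> (\<exists>vs. max_chain_list X vs \<and> length vs = length us \<and>
      (\<forall>i j. i < j \<and> j < length us \<longrightarrow>
         \<theta> (e_elem (us ! i) (us ! j)) = e_elem (vs ! (length us - 1 - j)) (vs ! (length us - 1 - i))))"

definition M_set :: "'a::order set \<Rightarrow> (('a \<times> 'a \<Rightarrow> 'k::field) \<Rightarrow> ('a \<times> 'a \<Rightarrow> 'k)) set" where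
  "M_set X = {\<theta>. bij_betw \<theta> (basis_B X) (basis_B X) \<and>
      (\<forall>us. max_chain_list X us \<longrightarrow> increasing_on X \<theta> us \<or> decreasing_on X \<theta> us)}"

text \<open>sigma : X^2_< \<rightarrow> K^*; values outside X^2_< are irrelevant.\<close>
definition compatible :: "'a::order set \<Rightarrow> ('a \<times> 'a \<Rightarrow> 'k::field) \<Rightarrow> (('a \<times> 'a \<Rightarrow> 'k) \<Rightarrow> ('a \<times> 'a \<Rightarrow> 'k)) \<Rightarrow> bool" where
  "compatible X \<sigma> \<theta> \<longleftrightarrow> (\<forall>x\<in>X. \<forall>y\<in>X. \<forall>z\<in>X. x < y \<and> y < z \<longrightarrow>
      (\<theta> (e_elem x z) = inc_mult X (\<theta> (e_elem x y)) (\<theta> (e_elem y z)) \<longrightarrow> \<sigma> (x, z) = \<sigma> (x, y) * \<sigma> (y, z)) \<and>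
      (\<theta> (e_elem x z) = inc_mult X (\<theta> (e_elem y z)) (\<theta> (e_elem x y)) \<longrightarrow> \<sigma> (x, z) = - (\<sigma> (x, y) * \<sigma> (y, z))))"

end

theory Submission
  imports Defs
begin

text \<open>
  Call a triple x < y < z of X straight if \<theta>(e_xz) = \<theta>(e_xy) \<theta>(e_yz) and twisted if
  \<theta>(e_xz) = \<theta>(e_yz) \<theta>(e_xy). On a maximal chain \<theta> is increasing or decreasing, so all
  triples of a maximal chain are of the same kind, and every triple is of exactly one kind.

  The edge sets of maximal
  chains form a finite set mapped injectively into itself by \<theta>, hence \<theta> permutes them.
  This shows that the kind of (w, x, y) does not depend on w < x: if (t1, x, y) were straight
  and (t2, x, y) twisted, the edges \<theta>(e_t1x), \<theta>(e_xy), \<theta>(e_t2x) would lie on one chain,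
  whose maximal extension is the image of a maximal chain through t1, t2, x, y.

  Now put \<sigma>(x, y) = -1 if (w, x, y) is twisted for some w < x, and 1 otherwise. For
  x < y < z, the triples of a chain w < x < y < z (or the minimality of x) show that
  \<sigma>(x, z) = \<sigma>(x, y) \<sigma>(y, z), negated exactly when (x, y, z) is twisted.
\<close>

lemma e_elem_nonzero: "(e_elem a b :: 'a \<times> 'a \<Rightarrow> 'k::field) \<noteq> (\<lambda>_. 0)"
proof
  assume "(e_elem a b :: 'a \<times> 'a \<Rightarrow> 'k) = (\<lambda>_. 0)"
  then have "(e_elem a b :: 'a \<times> 'a \<Rightarrow> 'k) (a, b) = 0" by simp
  then show False by (simp add: e_elem_def)
qed

lemma e_elem_eq_iff: "(e_elem a b :: 'a \<times> 'a \<Rightarrow> 'k::field) = e_elem c d \<longleftrightarrow> a = c \<and> b = d"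
proof
  assume "(e_elem a b :: 'a \<times> 'a \<Rightarrow> 'k) = e_elem c d"
  then have "(e_elem a b :: 'a \<times> 'a \<Rightarrow> 'k) (a, b) = e_elem c d (a, b)" by simp
  then show "a = c \<and> b = d" by (simp add: e_elem_def split: if_splits)
qed simp

lemma e_elem_in_basis_B_iff:
  "(e_elem a b :: 'a::order \<times> 'a \<Rightarrow> 'k::field) \<in> basis_B C \<longleftrightarrow> a \<in> C \<and> b \<in> C \<and> a < b"
  by (auto simp: basis_B_def e_elem_eq_iff)

lemma basis_B_mono: "C \<subseteq> D \<Longrightarrow> (basis_B C :: ('a::order \<times> 'a \<Rightarrow> 'k::field) set) \<subseteq> basis_B D"
  unfolding basis_B_def by blast

lemma inc_mult_e_elem:
  assumes "finite X"
  shows "inc_mult X (e_elem a b) (e_elem c d :: 'a::order \<times> 'a \<Rightarrow> 'k::field) =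
    (if b = c \<and> a \<in> X \<and> b \<in> X \<and> d \<in> X \<and> a \<le> b \<and> b \<le> d then e_elem a d else (\<lambda>_. 0))"
proof (rule ext, clarify)
  fix p q :: 'a
  let ?S = "{z\<in>X. p \<le> z \<and> z \<le> q}"
  have "(\<lambda>z. (e_elem a b :: 'a \<times> 'a \<Rightarrow> 'k) (p, z) * e_elem c d (z, q)) =
        (\<lambda>z. if z = b then (if p = a \<and> b = c \<and> q = d then 1 else 0) else 0)"
    by (auto simp: e_elem_def)
  moreover have "finite ?S" using assms by simp
  ultimately have sum: "(\<Sum>z\<in>?S. (e_elem a b :: 'a \<times> 'a \<Rightarrow> 'k) (p, z) * e_elem c d (z, q)) =
      (if b \<in> ?S then (if p = a \<and> b = c \<and> q = d then 1 else 0) else 0)"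
    by (simp only: sum.delta)
  show "inc_mult X (e_elem a b) (e_elem c d :: 'a \<times> 'a \<Rightarrow> 'k) (p, q) =
    (if b = c \<and> a \<in> X \<and> b \<in> X \<and> d \<in> X \<and> a \<le> b \<and> b \<le> d then e_elem a d else (\<lambda>_. 0)) (p, q)"
  proof (cases "p = a \<and> b = c \<and> q = d")
    case True
    then show ?thesis using sum by (auto simp: inc_mult_def e_elem_def intro: order_trans)
  next
    case False
    then show ?thesis using sum by (auto simp: inc_mult_def e_elem_def)
  qed
qed

lemma setcompr_cong2:
  "(\<And>i j. P i j \<Longrightarrow> f i j = g i j) \<Longrightarrow> {f i j | i j. P i j} = {g i j | i j. P i j}"
  by (intro Collect_cong) metis

lemma reflected_index_pairs:
  "{f (m - 1 - j) (m - 1 - i) | i j. i < j \<and> j < m} = {f k l | k l. k < l \<and> (l::nat) < m}"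
proof (intro equalityI subsetI)
  fix s assume "s \<in> {f (m - 1 - j) (m - 1 - i) | i j. i < j \<and> j < m}"
  then obtain i j where "s = f (m - 1 - j) (m - 1 - i)" "i < j" "j < m" by blast
  then show "s \<in> {f k l | k l. k < l \<and> l < m}"
    by (intro CollectI exI[of _ "m - 1 - j"] exI[of _ "m - 1 - i"]) auto
next
  fix s assume "s \<in> {f k l | k l. k < l \<and> l < m}"
  then obtain k l where "s = f k l" "k < l" "l < m" by blast
  then show "s \<in> {f (m - 1 - j) (m - 1 - i) | i j. i < j \<and> j < m}"
    by (intro CollectI exI[of _ "m - 1 - l"] exI[of _ "m - 1 - k"]) auto
qed

lemma sorted_wrt_less_index_less:
  assumes "sorted_wrt (<) xs" "i < length xs" "j < length xs" "xs ! i < (xs ! j :: 'a::order)"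
  shows "i < j"
proof (rule ccontr)
  assume "\<not> i < j"
  then consider "j < i" | "i = j" by linarith
  then show False
    using assms sorted_wrt_nth_less[OF assms(1), of j i] by cases auto
qed

lemma sorted_wrt_less_triple_indices:
  assumes "sorted_wrt (<) us" "x \<in> set us" "y \<in> set us" "z \<in> set us" "x < y" "y < (z :: 'a::order)"
  obtains i j k where "i < j" "j < k" "k < length us" "x = us ! i" "y = us ! j" "z = us ! k"
proof -
  have "\<exists>i < length us. v = us ! i" if "v \<in> set us" for v
    using that by (auto simp: in_set_conv_nth)
  then obtain i j k where ijk: "i < length us" "j < length us" "k < length us"
    "x = us ! i" "y = us ! j" "z = us ! k"
    using assms(2-4) by meson
  moreover have "i < j" "j < k"
    using sorted_wrt_less_index_less[OF assms(1)] ijk assms(5,6) by simp_all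
  ultimately show thesis using that by blast
qed

lemma basis_B_set_sorted:
  assumes "sorted_wrt (<) us"
  shows "(basis_B (set us) :: ('a::order \<times> 'a \<Rightarrow> 'k::field) set) =
    {e_elem (us ! i) (us ! j) | i j. i < j \<and> j < length us}"
proof (intro equalityI subsetI)
  fix s :: "'a \<times> 'a \<Rightarrow> 'k"
  assume "s \<in> basis_B (set us)"
  then obtain x y where "s = e_elem x y" "x \<in> set us" "y \<in> set us" "x < y"
    unfolding basis_B_def by blast
  moreover from this obtain i j where "i < length us" "us ! i = x" "j < length us" "us ! j = y"
    by (meson in_set_conv_nth)
  ultimately show "s \<in> {e_elem (us ! i) (us ! j) | i j. i < j \<and> j < length us}"
    using sorted_wrt_less_index_less[OF assms] by blast
next
  fix s :: "'a \<times> 'a \<Rightarrow> 'k"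
  assume "s \<in> {e_elem (us ! i) (us ! j) | i j. i < j \<and> j < length us}"
  then show "s \<in> basis_B (set us)"
    unfolding basis_B_def using sorted_wrt_nth_less[OF assms] by fastforce
qed

lemma is_chain_in_of_sorted:
  assumes "sorted_wrt (<) xs" "set xs \<subseteq> X"
  shows "is_chain_in X (set xs)"
proof -
  have "xs ! i \<le> xs ! j \<or> xs ! j \<le> xs ! i" if "i < length xs" "j < length xs" for i j
    using that sorted_wrt_nth_less[OF assms(1), of i j] sorted_wrt_nth_less[OF assms(1), of j i]
    by (cases i j rule: linorder_cases) auto
  then show ?thesis
    using assms(2) unfolding is_chain_in_def by (metis in_set_conv_nth)
qed

lemma sorted_list_of_chain:
  assumes "finite C" "\<forall>a\<in>C. \<forall>b\<in>C. a \<le> b \<or> b \<le> (a :: 'a::order)"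
  shows "\<exists>us. sorted_wrt (<) us \<and> set us = C"
  using assms
proof (induction C rule: finite_induct)
  case empty then show ?case by simp
next
  case (insert x F)
  then obtain us where us: "sorted_wrt (<) us" "set us = F" by auto
  let ?vs = "filter (\<lambda>y. y < x) us @ x # filter (\<lambda>y. x < y) us"
  have "sorted_wrt (<) ?vs"
    using us by (auto simp: sorted_wrt_append sorted_wrt_filter intro: less_trans)
  moreover have "\<forall>y\<in>F. y < x \<or> x < y" using insert by (metis insertCI order_le_less)
  then have "set ?vs = insert x F" using us by auto
  ultimately show ?case by blast
qed

lemma maximal_chain_superset:
  assumes "finite X" "is_chain_in X S"
  obtains C where "is_maximal_chain X C" "S \<subseteq> C"
proof -
  let ?Cs = "{C. is_chain_in X C \<and> S \<subseteq> C}"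
  have "?Cs \<subseteq> Pow X" by (auto simp: is_chain_in_def)
  then have "finite ?Cs" using assms(1) by (meson finite_Pow_iff finite_subset)
  moreover have "?Cs \<noteq> {}" using assms by auto
  ultimately obtain m where m: "m \<in> ?Cs" "\<forall>b\<in>?Cs. m \<le> b \<longrightarrow> m = b"
    using finite_has_maximal[of ?Cs] by meson
  have "is_maximal_chain X m"
    unfolding is_maximal_chain_def
  proof (intro conjI allI impI)
    show "is_chain_in X m" using m(1) by simp
  next
    fix D assume "is_chain_in X D \<and> m \<subseteq> D"
    then show "D = m" using m by auto
  qed
  then show thesis using that m(1) by blast
qed

lemma maximal_chain_subset: "is_maximal_chain X C \<Longrightarrow> C \<subseteq> X"
  by (simp add: is_maximal_chain_def is_chain_in_def)

lemma max_chain_list_sorted: "max_chain_list X us \<Longrightarrow> sorted_wrt (<) us"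
  by (simp add: max_chain_list_def)

lemma max_chain_list_nth_mem: "max_chain_list X us \<Longrightarrow> i < length us \<Longrightarrow> us ! i \<in> X"
  unfolding max_chain_list_def using maximal_chain_subset nth_mem by blast

lemma max_chain_list_of_maximal_chain:
  assumes "finite X" "is_maximal_chain X C"
  obtains us where "max_chain_list X us" "set us = C"
proof -
  have "finite C" using assms by (meson finite_subset maximal_chain_subset)
  moreover have "\<forall>a\<in>C. \<forall>b\<in>C. a \<le> b \<or> b \<le> a"
    using assms(2) by (simp add: is_maximal_chain_def is_chain_in_def)
  ultimately obtain us where "sorted_wrt (<) us" "set us = C" using sorted_list_of_chain by blast
  then show thesis using that assms(2) by (simp add: max_chain_list_def)
qed

locale M_set_map =
  fixes X :: "'a::order set" and \<theta> :: "('a \<times> 'a \<Rightarrow> 'k::field) \<Rightarrow> ('a \<times> 'a \<Rightarrow> 'k)"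
  assumes finite_X: "finite X" and \<theta>_in_M: "\<theta> \<in> M_set X"
begin

lemma bij_betw_basis: "bij_betw \<theta> (basis_B X) (basis_B X)"
  using \<theta>_in_M by (simp add: M_set_def)

lemma inj_on_basis: "inj_on \<theta> (basis_B X)"
  by (rule bij_betw_imp_inj_on[OF bij_betw_basis])

lemma increasing_or_decreasing: "max_chain_list X us \<Longrightarrow> increasing_on X \<theta> us \<or> decreasing_on X \<theta> us"
  using \<theta>_in_M by (simp add: M_set_def)

lemma \<theta>_e_elem:
  assumes "x \<in> X" "y \<in> X" "x < y"
  obtains a b where "a \<in> X" "b \<in> X" "a < b" "\<theta> (e_elem x y) = e_elem a b"
proof -
  have "(e_elem x y :: 'a \<times> 'a \<Rightarrow> 'k) \<in> basis_B X" using assms by (simp add: e_elem_in_basis_B_iff)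
  then have "\<theta> (e_elem x y) \<in> basis_B X"
    by (rule bij_betw_apply[OF bij_betw_basis])
  then show thesis using that unfolding basis_B_def by blast
qed

lemma mem_chain_if_\<theta>_mem_image:
  assumes "x \<in> X" "y \<in> X" "x < y" "C \<subseteq> X" "\<theta> (e_elem x y) \<in> \<theta> ` basis_B C"
  shows "x \<in> C" "y \<in> C"
proof -
  have "(e_elem x y :: 'a \<times> 'a \<Rightarrow> 'k) \<in> basis_B X"
    using assms(1-3) by (simp add: e_elem_in_basis_B_iff)
  moreover have "(basis_B C :: ('a \<times> 'a \<Rightarrow> 'k) set) \<subseteq> basis_B X"
    using assms(4) by (rule basis_B_mono)
  ultimately have "(e_elem x y :: 'a \<times> 'a \<Rightarrow> 'k) \<in> basis_B C"
    using assms(5) inj_on_image_mem_iff[OF inj_on_basis] by blast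
  then show "x \<in> C" "y \<in> C" by (simp_all add: e_elem_in_basis_B_iff)
qed

definition straight :: "'a \<Rightarrow> 'a \<Rightarrow> 'a \<Rightarrow> bool" where
  "straight x y z \<longleftrightarrow> \<theta> (e_elem x z) = inc_mult X (\<theta> (e_elem x y)) (\<theta> (e_elem y z))"

definition twisted :: "'a \<Rightarrow> 'a \<Rightarrow> 'a \<Rightarrow> bool" where
  "twisted x y z \<longleftrightarrow> \<theta> (e_elem x z) = inc_mult X (\<theta> (e_elem y z)) (\<theta> (e_elem x y))"

lemma straight_adjacent:
  assumes "x \<in> X" "y \<in> X" "z \<in> X" "x < y" "y < z" "straight x y z"
    and "\<theta> (e_elem x y) = e_elem a b" "\<theta> (e_elem y z) = e_elem c d"
  shows "b = c"
proof (rule ccontr)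
  assume "b \<noteq> c"
  then have "\<theta> (e_elem x z) = (\<lambda>_. 0)"
    using assms by (simp add: straight_def inc_mult_e_elem finite_X)
  moreover obtain p q where "\<theta> (e_elem x z) = e_elem p q"
    using \<theta>_e_elem assms(1,3-5) by (meson order.strict_trans)
  ultimately show False using e_elem_nonzero by metis
qed

lemma twisted_adjacent:
  assumes "x \<in> X" "y \<in> X" "z \<in> X" "x < y" "y < z" "twisted x y z"
    and "\<theta> (e_elem x y) = e_elem a b" "\<theta> (e_elem y z) = e_elem c d"
  shows "d = a"
proof (rule ccontr)
  assume "d \<noteq> a"
  then have "\<theta> (e_elem x z) = (\<lambda>_. 0)"
    using assms by (simp add: twisted_def inc_mult_e_elem finite_X)
  moreover obtain p q where "\<theta> (e_elem x z) = e_elem p q"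
    using \<theta>_e_elem assms(1,3-5) by (meson order.strict_trans)
  ultimately show False using e_elem_nonzero by metis
qed

lemma not_straight_and_twisted:
  assumes "x \<in> X" "y \<in> X" "z \<in> X" "x < y" "y < z"
  shows "\<not> (straight x y z \<and> twisted x y z)"
proof
  assume "straight x y z \<and> twisted x y z"
  moreover obtain a b where ab: "a < b" "\<theta> (e_elem x y) = e_elem a b"
    using \<theta>_e_elem assms(1,2,4) by metis
  moreover obtain c d where cd: "c < d" "\<theta> (e_elem y z) = e_elem c d"
    using \<theta>_e_elem assms(2,3,5) by metis
  ultimately have "b = c" "d = a"
    using straight_adjacent twisted_adjacent assms by blast+
  then show False using ab(1) cd(1) by simp
qed

lemma straight_if_increasing_on:
  assumes "max_chain_list X us" "increasing_on X \<theta> us" "i < j" "j < k" "k < length us"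
  shows "straight (us ! i) (us ! j) (us ! k)"
proof -
  obtain vs where vs: "max_chain_list X vs" "length vs = length us"
    "\<forall>i j. i < j \<and> j < length us \<longrightarrow> \<theta> (e_elem (us ! i) (us ! j)) = e_elem (vs ! i) (vs ! j)"
    using assms(2) unfolding increasing_on_def by blast
  have "\<theta> (e_elem (us ! i) (us ! k)) = e_elem (vs ! i) (vs ! k)"
    "\<theta> (e_elem (us ! i) (us ! j)) = e_elem (vs ! i) (vs ! j)"
    "\<theta> (e_elem (us ! j) (us ! k)) = e_elem (vs ! j) (vs ! k)"
    using vs(3) assms by auto
  moreover have "vs ! i < vs ! j" "vs ! j < vs ! k"
    using sorted_wrt_nth_less[OF max_chain_list_sorted[OF vs(1)]] assms vs(2) by auto
  moreover have "vs ! i \<in> X" "vs ! j \<in> X" "vs ! k \<in> X"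
    using max_chain_list_nth_mem[OF vs(1)] assms vs(2) by auto
  ultimately show ?thesis
    unfolding straight_def by (simp add: inc_mult_e_elem finite_X order.strict_implies_order)
qed

lemma twisted_if_decreasing_on:
  assumes "max_chain_list X us" "decreasing_on X \<theta> us" "i < j" "j < k" "k < length us"
  shows "twisted (us ! i) (us ! j) (us ! k)"
proof -
  define r where "r i = length us - 1 - i" for i
  obtain vs where vs: "max_chain_list X vs" "length vs = length us"
    "\<forall>i j. i < j \<and> j < length us \<longrightarrow> \<theta> (e_elem (us ! i) (us ! j)) = e_elem (vs ! r j) (vs ! r i)"
    using assms(2) unfolding decreasing_on_def r_def by blast
  have "\<theta> (e_elem (us ! i) (us ! k)) = e_elem (vs ! r k) (vs ! r i)"
    "\<theta> (e_elem (us ! i) (us ! j)) = e_elem (vs ! r j) (vs ! r i)"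
    "\<theta> (e_elem (us ! j) (us ! k)) = e_elem (vs ! r k) (vs ! r j)"
    using vs(3) assms by auto
  moreover have "r k < r j" "r j < r i" "r i < length vs"
    using assms vs(2) by (auto simp: r_def)
  then have "vs ! r k < vs ! r j" "vs ! r j < vs ! r i"
    using sorted_wrt_nth_less[OF max_chain_list_sorted[OF vs(1)]] by auto
  moreover have "vs ! r i \<in> X" "vs ! r j \<in> X" "vs ! r k \<in> X"
    using max_chain_list_nth_mem[OF vs(1)] \<open>r k < r j\<close> \<open>r j < r i\<close> \<open>r i < length vs\<close> by auto
  ultimately show ?thesis
    unfolding twisted_def by (simp add: inc_mult_e_elem finite_X order.strict_implies_order)
qed

lemma maximal_chain_uniform:
  assumes "is_maximal_chain X C"
  shows "(\<forall>x\<in>C. \<forall>y\<in>C. \<forall>z\<in>C. x < y \<longrightarrow> y < z \<longrightarrow> straight x y z) \<or>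
         (\<forall>x\<in>C. \<forall>y\<in>C. \<forall>z\<in>C. x < y \<longrightarrow> y < z \<longrightarrow> twisted x y z)"
proof -
  obtain us where us: "max_chain_list X us" "set us = C"
    using max_chain_list_of_maximal_chain[OF finite_X assms] .
  note indices = sorted_wrt_less_triple_indices[OF max_chain_list_sorted[OF us(1)], unfolded us(2)]
  from increasing_or_decreasing[OF us(1)] show ?thesis
  proof
    assume inc: "increasing_on X \<theta> us"
    have "straight x y z" if xyz: "x \<in> C" "y \<in> C" "z \<in> C" "x < y" "y < z" for x y z
    proof -
      obtain i j k where "i < j" "j < k" "k < length us" "x = us ! i" "y = us ! j" "z = us ! k"
        using indices[OF xyz] .
      then show ?thesis using straight_if_increasing_on[OF us(1) inc] by simp
    qed
    then show ?thesis by blast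
  next
    assume dec: "decreasing_on X \<theta> us"
    have "twisted x y z" if xyz: "x \<in> C" "y \<in> C" "z \<in> C" "x < y" "y < z" for x y z
    proof -
      obtain i j k where "i < j" "j < k" "k < length us" "x = us ! i" "y = us ! j" "z = us ! k"
        using indices[OF xyz] .
      then show ?thesis using twisted_if_decreasing_on[OF us(1) dec] by simp
    qed
    then show ?thesis by blast
  qed
qed

lemma straight_iff_not_twisted:
  assumes "x \<in> X" "y \<in> X" "z \<in> X" "x < y" "y < z"
  shows "straight x y z \<longleftrightarrow> \<not> twisted x y z"
proof -
  have "sorted_wrt (<) [x, y, z]" using assms(4,5) by (auto intro: less_trans)
  then have "is_chain_in X {x, y, z}"
    using is_chain_in_of_sorted[of "[x, y, z]" X] assms(1-3) by simp
  then obtain C where C: "is_maximal_chain X C" "{x, y, z} \<subseteq> C"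
    using maximal_chain_superset[OF finite_X] by blast
  then have "straight x y z \<or> twisted x y z"
    using maximal_chain_uniform[OF C(1)] assms(4,5) by blast
  then show ?thesis using not_straight_and_twisted[OF assms] by blast
qed

lemma twisted_eq_on_chain:
  assumes "is_chain_in X S" "x \<in> S" "y \<in> S" "z \<in> S" "x < y" "y < z"
    and "x' \<in> S" "y' \<in> S" "z' \<in> S" "x' < y'" "y' < z'"
  shows "twisted x y z = twisted x' y' z'"
proof -
  obtain C where C: "is_maximal_chain X C" "S \<subseteq> C"
    using maximal_chain_superset[OF finite_X assms(1)] .
  then have in_C: "x \<in> C" "y \<in> C" "z \<in> C" "x' \<in> C" "y' \<in> C" "z' \<in> C"
    using assms by auto
  moreover have "C \<subseteq> X" using C(1) by (rule maximal_chain_subset)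
  ultimately have in_X: "x \<in> X" "y \<in> X" "z \<in> X" "x' \<in> X" "y' \<in> X" "z' \<in> X"
    by auto
  from maximal_chain_uniform[OF C(1)] show ?thesis
  proof
    assume "\<forall>x\<in>C. \<forall>y\<in>C. \<forall>z\<in>C. x < y \<longrightarrow> y < z \<longrightarrow> straight x y z"
    then have "straight x y z" "straight x' y' z'" using in_C assms by blast+
    then show ?thesis
      using not_straight_and_twisted in_X assms by blast
  next
    assume "\<forall>x\<in>C. \<forall>y\<in>C. \<forall>z\<in>C. x < y \<longrightarrow> y < z \<longrightarrow> twisted x y z"
    then show ?thesis using in_C assms by blast
  qed
qed

lemma image_of_maximal_chain:
  assumes "is_maximal_chain X C"
  obtains D where "is_maximal_chain X D" "\<theta> ` basis_B C = basis_B D"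
proof -
  obtain us where us: "max_chain_list X us" "set us = C"
    using max_chain_list_of_maximal_chain[OF finite_X assms] .
  let ?m = "length us"
  have C_basis: "(basis_B C :: ('a \<times> 'a \<Rightarrow> 'k) set) = {e_elem (us ! i) (us ! j) | i j. i < j \<and> j < ?m}"
    using basis_B_set_sorted[OF max_chain_list_sorted[OF us(1)]] us(2) by simp
  have C_pairs: "\<theta> ` basis_B C = {\<theta> (e_elem (us ! i) (us ! j)) | i j. i < j \<and> j < ?m}"
    unfolding C_basis by blast
  from increasing_or_decreasing[OF us(1)] show thesis
  proof
    assume "increasing_on X \<theta> us"
    then obtain vs where vs: "max_chain_list X vs" "length vs = ?m"
      "\<forall>i j. i < j \<and> j < ?m \<longrightarrow> \<theta> (e_elem (us ! i) (us ! j)) = e_elem (vs ! i) (vs ! j)"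
      unfolding increasing_on_def by blast
    have "\<theta> ` basis_B C = {e_elem (vs ! i) (vs ! j) | i j. i < j \<and> j < ?m}"
      unfolding C_pairs using vs(3) by (intro setcompr_cong2) simp
    also have "\<dots> = basis_B (set vs)"
      using basis_B_set_sorted[where 'k = 'k, OF max_chain_list_sorted[OF vs(1)]] vs(2) by simp
    finally show thesis using that vs(1) unfolding max_chain_list_def by blast
  next
    assume "decreasing_on X \<theta> us"
    then obtain vs where vs: "max_chain_list X vs" "length vs = ?m"
      "\<forall>i j. i < j \<and> j < ?m \<longrightarrow>
         \<theta> (e_elem (us ! i) (us ! j)) = e_elem (vs ! (?m - 1 - j)) (vs ! (?m - 1 - i))"
      unfolding decreasing_on_def by blast
    have "\<theta> ` basis_B C = {e_elem (vs ! (?m - 1 - j)) (vs ! (?m - 1 - i)) | i j. i < j \<and> j < ?m}"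
      unfolding C_pairs using vs(3) by (intro setcompr_cong2) simp
    also have "\<dots> = {e_elem (vs ! k) (vs ! l) | k l. k < l \<and> l < ?m}"
      by (rule reflected_index_pairs)
    also have "\<dots> = basis_B (set vs)"
      using basis_B_set_sorted[where 'k = 'k, OF max_chain_list_sorted[OF vs(1)]] vs(2) by simp
    finally show thesis using that vs(1) unfolding max_chain_list_def by blast
  qed
qed

lemma preimage_of_maximal_chain:
  assumes "is_maximal_chain X D"
  obtains C where "is_maximal_chain X C" "basis_B D = \<theta> ` basis_B C"
proof -
  let ?P = "basis_B ` {C. is_maximal_chain X C} :: ('a \<times> 'a \<Rightarrow> 'k) set set"
  have "{C. is_maximal_chain X C} \<subseteq> Pow X"
    using maximal_chain_subset by blast
  then have "finite ?P" using finite_X by (meson finite_Pow_iff finite_imageI finite_subset)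
  moreover have "(image \<theta>) ` ?P \<subseteq> ?P"
    using image_of_maximal_chain by blast
  moreover have "inj_on (image \<theta>) ?P"
  proof (rule inj_onI)
    fix A B assume "A \<in> ?P" "B \<in> ?P" and image_eq: "\<theta> ` A = \<theta> ` B"
    have "(basis_B C :: ('a \<times> 'a \<Rightarrow> 'k) set) \<subseteq> basis_B X"
      if "is_maximal_chain X C" for C
      using that by (intro basis_B_mono maximal_chain_subset)
    with \<open>A \<in> ?P\<close> \<open>B \<in> ?P\<close> have "A \<subseteq> basis_B X" "B \<subseteq> basis_B X" by auto
    then show "A = B" using image_eq inj_on_image_eq_iff[OF inj_on_basis] by metis
  qed
  ultimately have "(image \<theta>) ` ?P = ?P" by (rule endo_inj_surj)
  moreover have "basis_B D \<in> ?P" using assms by blast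
  ultimately show thesis using that by (metis (no_types, lifting) imageE mem_Collect_eq)
qed

lemma common_maximal_chain_if_straight_twisted:
  assumes X: "t1 \<in> X" "t2 \<in> X" "x \<in> X" "y \<in> X" and lt: "t1 < x" "t2 < x" "x < y"
    and "straight t1 x y" "twisted t2 x y"
  obtains C where "is_maximal_chain X C" "{t1, t2, x, y} \<subseteq> C"
proof -
  obtain a b where ab: "a \<in> X" "b \<in> X" "a < b" "\<theta> (e_elem x y) = e_elem a b"
    using \<theta>_e_elem[OF X(3,4) lt(3)] .
  obtain c a' where ca: "c \<in> X" "a' \<in> X" "c < a'" "\<theta> (e_elem t1 x) = e_elem c a'"
    using \<theta>_e_elem[OF X(1,3) lt(1)] .
  obtain b' f where bf: "b' \<in> X" "f \<in> X" "b' < f" "\<theta> (e_elem t2 x) = e_elem b' f"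
    using \<theta>_e_elem[OF X(2,3) lt(2)] .
  have "a' = a" using straight_adjacent[OF X(1,3,4) lt(1,3) assms(8) ca(4) ab(4)] .
  moreover have "b' = b" using twisted_adjacent[OF X(2,3,4) lt(2,3) assms(9) bf(4) ab(4)] by simp
  ultimately have "sorted_wrt (<) [c, a, b, f]"
    using ab(3) ca(3) bf(3) by (auto intro: less_trans)
  then have "is_chain_in X {c, a, b, f}"
    using is_chain_in_of_sorted[of "[c, a, b, f]" X] ab ca bf \<open>a' = a\<close> \<open>b' = b\<close> by simp
  then obtain D where D: "is_maximal_chain X D" "{c, a, b, f} \<subseteq> D"
    using maximal_chain_superset[OF finite_X] by blast
  obtain C where C: "is_maximal_chain X C" "basis_B D = \<theta> ` basis_B C"
    using preimage_of_maximal_chain[OF D(1)] .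
  have "C \<subseteq> X" using C(1) by (rule maximal_chain_subset)
  have "\<theta> (e_elem x y) \<in> basis_B D" "\<theta> (e_elem t1 x) \<in> basis_B D"
    "\<theta> (e_elem t2 x) \<in> basis_B D"
    using ab ca bf D(2) \<open>a' = a\<close> \<open>b' = b\<close> by (simp_all add: e_elem_in_basis_B_iff)
  then have "\<theta> (e_elem x y) \<in> \<theta> ` basis_B C" "\<theta> (e_elem t1 x) \<in> \<theta> ` basis_B C"
    "\<theta> (e_elem t2 x) \<in> \<theta> ` basis_B C"
    using C(2) by simp_all
  then have "x \<in> C" "y \<in> C" "t1 \<in> C" "t2 \<in> C"
    using mem_chain_if_\<theta>_mem_image[OF _ _ _ \<open>C \<subseteq> X\<close>] X lt by simp_all
  then show thesis using that C(1) by blast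
qed

lemma twisted_independent_of_first:
  assumes "t1 \<in> X" "t2 \<in> X" "x \<in> X" "y \<in> X" "t1 < x" "t2 < x" "x < y"
  shows "twisted t1 x y = twisted t2 x y"
proof -
  have False
    if s: "s1 \<in> X" "s2 \<in> X" "s1 < x" "s2 < x" "straight s1 x y" "twisted s2 x y" for s1 s2
  proof -
    obtain C where C: "is_maximal_chain X C" "{s1, s2, x, y} \<subseteq> C"
      using common_maximal_chain_if_straight_twisted[OF s(1,2) assms(3,4) s(3,4) assms(7) s(5,6)] .
    have "is_chain_in X C" using C(1) by (simp add: is_maximal_chain_def)
    then have "twisted s1 x y = twisted s2 x y"
      using twisted_eq_on_chain[of C] C(2) s(3,4) assms(7) by simp
    moreover have "straight s1 x y \<longleftrightarrow> \<not> twisted s1 x y"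
      using straight_iff_not_twisted s(1,3) assms(3,4,7) by blast
    ultimately show False using s(5,6) by simp
  qed
  moreover have "straight t x y \<longleftrightarrow> \<not> twisted t x y" if "t \<in> X" "t < x" for t
    using straight_iff_not_twisted that assms(3,4,7) by blast
  ultimately show ?thesis using assms(1,2,5,6) by metis
qed

definition \<sigma> :: "'a \<times> 'a \<Rightarrow> 'k" where
  "\<sigma> = (\<lambda>(x, y). if \<exists>w\<in>X. w < x \<and> twisted w x y then - 1 else 1)"

lemma \<sigma>_nonzero: "\<sigma> p \<noteq> 0"
  by (cases p) (simp add: \<sigma>_def)

lemma \<sigma>_eq_if_lower:
  assumes "w \<in> X" "x \<in> X" "y \<in> X" "w < x" "x < y"
  shows "\<sigma> (x, y) = (if twisted w x y then - 1 else 1)"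
proof -
  have "(\<exists>w'\<in>X. w' < x \<and> twisted w' x y) \<longleftrightarrow> twisted w x y"
  proof
    assume "\<exists>w'\<in>X. w' < x \<and> twisted w' x y"
    then obtain w' where "w' \<in> X" "w' < x" "twisted w' x y" by blast
    then show "twisted w x y" using twisted_independent_of_first[of w' w x y] assms by simp
  qed (use assms in blast)
  then show ?thesis by (simp add: \<sigma>_def)
qed

lemma \<sigma>_eq_if_minimal: "\<not> (\<exists>w\<in>X. w < x) \<Longrightarrow> \<sigma> (x, y) = 1"
  by (auto simp: \<sigma>_def)

lemma \<sigma>_composition:
  assumes X: "x \<in> X" "y \<in> X" "z \<in> X" and lt: "x < y" "y < z"
  shows "\<sigma> (x, z) = (if twisted x y z then - (\<sigma> (x, y) * \<sigma> (y, z)) else \<sigma> (x, y) * \<sigma> (y, z))"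
proof -
  have yz: "\<sigma> (y, z) = (if twisted x y z then - 1 else 1)"
    using \<sigma>_eq_if_lower[OF X lt] .
  show ?thesis
  proof (cases "\<exists>w\<in>X. w < x")
    case True
    then obtain w where w: "w \<in> X" "w < x" by blast
    have "sorted_wrt (<) [w, x, y, z]" using w(2) lt by (auto intro: less_trans)
    then have chain: "is_chain_in X {w, x, y, z}"
      using is_chain_in_of_sorted[of "[w, x, y, z]" X] w(1) X by simp
    have "x < z" using lt by (rule order.strict_trans)
    have "twisted w x y = twisted x y z" "twisted w x z = twisted x y z"
      using twisted_eq_on_chain[OF chain, of w x y x y z] twisted_eq_on_chain[OF chain, of w x z x y z]
        w(2) lt \<open>x < z\<close> by simp_all
    moreover have "\<sigma> (x, y) = (if twisted w x y then - 1 else 1)"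
      "\<sigma> (x, z) = (if twisted w x z then - 1 else 1)"
      using \<sigma>_eq_if_lower[OF w(1) X(1,2) w(2) lt(1)] \<sigma>_eq_if_lower[OF w(1) X(1,3) w(2) \<open>x < z\<close>]
      by simp_all
    ultimately show ?thesis using yz by simp
  next
    case False
    then show ?thesis using yz \<sigma>_eq_if_minimal by simp
  qed
qed

lemma compatible_\<sigma>: "compatible X \<sigma> \<theta>"
  unfolding compatible_def
proof (intro ballI impI conjI)
  fix x y z assume X: "x \<in> X" "y \<in> X" "z \<in> X" and lt: "x < y \<and> y < z"
  show "\<sigma> (x, z) = \<sigma> (x, y) * \<sigma> (y, z)"
    if "\<theta> (e_elem x z) = inc_mult X (\<theta> (e_elem x y)) (\<theta> (e_elem y z))"
    using that \<sigma>_composition[OF X] straight_iff_not_twisted[OF X] lt by (simp add: straight_def)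
  show "\<sigma> (x, z) = - (\<sigma> (x, y) * \<sigma> (y, z))"
    if "\<theta> (e_elem x z) = inc_mult X (\<theta> (e_elem y z)) (\<theta> (e_elem x y))"
    using that \<sigma>_composition[OF X] lt by (simp add: twisted_def)
qed

end

theorem lemma2p8:
  fixes X :: "'a::order set" and \<theta> :: "('a \<times> 'a \<Rightarrow> 'k::field) \<Rightarrow> ('a \<times> 'a \<Rightarrow> 'k)"
  assumes "finite X" and "poset_connected X" and "\<theta> \<in> M_set X"
  shows "\<exists>\<sigma> :: 'a \<times> 'a \<Rightarrow> 'k. (\<forall>x\<in>X. \<forall>y\<in>X. x < y \<longrightarrow> \<sigma> (x, y) \<noteq> 0) \<and> compatible X \<sigma> \<theta>"
proof -
  interpret M_set_map X \<theta> using assms(1,3) by unfold_locales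
  show ?thesis using \<sigma>_nonzero compatible_\<sigma> by blast
qed

end
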